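(* Let $R:\ \mu=\rho^{(0)}\to\dots\to\rho^{(l)}=\nu$ be a sequence of diagrams and let $T\in\mathcal{T}(\lambda,R)$ be $\nu$-bounded. Then $\rho(\alpha)_{T(\alpha)}>c(\alpha)$ for all boxes $\alpha\in\lambda$ with $T(\alpha)$ unbarred.
   Context: Partitions are identified with Young diagrams; box $(i,j)$ is in row $i$, column $j$; content $c(\alpha)=j-i$; $\nu'_j$ is the length of column $j$ of $\nu$. A reverse $\lambda$-tableau is a filling $T$ of $\lambda$ by positive integers weakly decreasing along rows and strictly decreasing down columns. $\rho\to\sigma$ means $\sigma$ is obtained from $\rho$ by adding one box; for $R:\ \mu=\rho^{(0)}\to\dots\to\rho^{(l)}=\nu$, $r_i$ is the row of the box added to $\rho^{(i-1)}$. Column order: columns left to right, within a column bottom to top; $\prec$ is strict precedence. $\mathcal{T}(\lambda,R)$ consists of reverse $\lambda$-tableaux $T$ with chosen boxes $\alpha_1\prec\dots\prec\alpha_l$ such that $T(\alpha_i)=r_i$; those entries are barred, the rest unbarred. For $\alpha$ with $\alpha_i\prec\alpha\prec\alpha_{i+1}$ ($0\le i\le l$, conditions with $\alpha_0,\alpha_{l+1}$ void), $\rho(\alpha)=\rho^{(i)}$, and $\rho(\alpha)_k$ is the length of row $k$ of $\rho(\alpha)$. $T$ is $\nu$-bounded if $T(1,j)\le\nu'_j$ for all $j=1,\dots,\lambda_1$. *)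

theory Defs
  imports Main
begin

(* Boxes are pairs (row, column), 1-indexed. A Young diagram is a finite set of boxes
   closed under moving up/left. *)
definition is_diagram :: "(nat \<times> nat) set \<Rightarrow> bool" where
  "is_diagram D \<longleftrightarrow> finite D \<and>
     (\<forall>(i,j)\<in>D. 1 \<le> i \<and> 1 \<le> j \<and>
        (\<forall>i' j'. 1 \<le> i' \<and> i' \<le> i \<and> 1 \<le> j' \<and> j' \<le> j \<longrightarrow> (i',j') \<in> D))"

definition row_len :: "(nat \<times> nat) set \<Rightarrow> nat \<Rightarrow> nat" where
  "row_len D k = card {j. (k,j) \<in> D}"

definition col_len :: "(nat \<times> nat) set \<Rightarrow> nat \<Rightarrow> nat" where
  "col_len D j = card {i. (i,j) \<in> D}"

definition content :: "nat \<times> nat \<Rightarrow> int" where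
  "content b = int (snd b) - int (fst b)"

definition adds_box :: "(nat \<times> nat) set \<Rightarrow> (nat \<times> nat) set \<Rightarrow> bool" where
  "adds_box \<rho> \<sigma> \<longleftrightarrow> is_diagram \<rho> \<and> is_diagram \<sigma> \<and> \<rho> \<subseteq> \<sigma> \<and> card (\<sigma> - \<rho>) = 1"

definition added_row :: "(nat \<times> nat) set \<Rightarrow> (nat \<times> nat) set \<Rightarrow> nat" where
  "added_row \<rho> \<sigma> = fst (THE b. b \<in> \<sigma> - \<rho>)"

(* R : mu = rhos!0 -> ... -> rhos!l = nu, with l = length rhos - 1 *)
definition is_diagram_seq :: "(nat \<times> nat) set list \<Rightarrow> bool" where
  "is_diagram_seq rhos \<longleftrightarrow> rhos \<noteq> [] \<and> is_diagram (hd rhos) \<and>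
     (\<forall>i. Suc i < length rhos \<longrightarrow> adds_box (rhos ! i) (rhos ! Suc i))"

(* r_i (1-based), i = 1..l *)
definition seq_row :: "(nat \<times> nat) set list \<Rightarrow> nat \<Rightarrow> nat" where
  "seq_row rhos i = added_row (rhos ! (i - 1)) (rhos ! i)"

definition reverse_tableau :: "(nat \<times> nat) set \<Rightarrow> (nat \<times> nat \<Rightarrow> nat) \<Rightarrow> bool" where
  "reverse_tableau lam T \<longleftrightarrow>
     (\<forall>b\<in>lam. 1 \<le> T b) \<and>
     (\<forall>i j. (i,j) \<in> lam \<and> (i, Suc j) \<in> lam \<longrightarrow> T (i, Suc j) \<le> T (i,j)) \<and>
     (\<forall>i j. (i,j) \<in> lam \<and> (Suc i, j) \<in> lam \<longrightarrow> T (Suc i, j) < T (i,j))"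

definition col_prec :: "nat \<times> nat \<Rightarrow> nat \<times> nat \<Rightarrow> bool" where
  "col_prec a b \<longleftrightarrow> snd a < snd b \<or> (snd a = snd b \<and> fst b < fst a)"

(* (T, alphas) in calT(lambda, R); alphas!(k-1) is alpha_k, k = 1..l *)
definition in_calT :: "(nat \<times> nat) set \<Rightarrow> (nat \<times> nat) set list \<Rightarrow> (nat \<times> nat \<Rightarrow> nat)
    \<Rightarrow> (nat \<times> nat) list \<Rightarrow> bool" where
  "in_calT lam rhos T alphas \<longleftrightarrow> reverse_tableau lam T \<and>
     length alphas = length rhos - 1 \<and> set alphas \<subseteq> lam \<and>
     sorted_wrt col_prec alphas \<and>
     (\<forall>k. 1 \<le> k \<and> k \<le> length alphas \<longrightarrow> T (alphas ! (k - 1)) = seq_row rhos k)"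

(* rho(alpha) = rho^(i) where i = number of chosen boxes preceding alpha *)
definition rho_at :: "(nat \<times> nat) set list \<Rightarrow> (nat \<times> nat) list \<Rightarrow> nat \<times> nat \<Rightarrow> (nat \<times> nat) set" where
  "rho_at rhos alphas a = rhos ! card {k. k < length alphas \<and> col_prec (alphas ! k) a}"

definition nu_bounded :: "(nat \<times> nat) set \<Rightarrow> (nat \<times> nat) set \<Rightarrow> (nat \<times> nat \<Rightarrow> nat) \<Rightarrow> bool" where
  "nu_bounded lam nu T \<longleftrightarrow> (\<forall>j. 1 \<le> j \<and> j \<le> row_len lam 1 \<longrightarrow> T (1,j) \<le> col_len nu j)"

end

theory Submission
  imports Defs
begin

(* We prove the stronger statement that the bound holds for every box b of lambda
   when rho(b) is replaced by rho^(n_b), n_b being the number of chosen boxes not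
   after b in the column order (for unbarred b this is rho(b)). The proof is by
   induction backwards along the column order.  For a box below the first row the
   bound follows from the bound for the box directly above it, its immediate
   successor.  For a box (1, j) of the first row, nu-boundedness forces row T(1,j) to
   reach length j at some later step of R; the chosen box of that step lies in the
   first row right of column j, and its bound gives a contradiction. *)

lemma downclosed_eq_lessThan:
  fixes S :: "nat set"
  assumes fin: "finite S" and closed: "\<And>x y. x \<in> S \<Longrightarrow> y < x \<Longrightarrow> y \<in> S"
  shows "S = {..<card S}"
proof (cases "S = {}")
  case False
  define m where "m = Max S"
  have "m \<in> S" using fin False m_def by simp
  then have "S = {..m}"
    using closed Max_ge[OF fin] m_def by (auto simp: le_less)
  then show ?thesis by (simp add: lessThan_Suc_atMost)
qed simp

lemma downclosed_eq_atLeastAtMost: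
  fixes S :: "nat set"
  assumes fin: "finite S" and pos: "\<And>x. x \<in> S \<Longrightarrow> 1 \<le> x"
    and closed: "\<And>x y. x \<in> S \<Longrightarrow> 1 \<le> y \<Longrightarrow> y < x \<Longrightarrow> y \<in> S"
  shows "S = {1..card S}"
proof -
  have zero: "0 \<notin> S" using pos not_one_le_zero by blast
  have "insert 0 S = {..<card (insert 0 S)}"
  proof (rule downclosed_eq_lessThan)
    fix x y assume "x \<in> insert 0 S" "y < x"
    then show "y \<in> insert 0 S"
    proof (cases "y = 0")
      case False
      then show ?thesis using closed[of x y] \<open>x \<in> insert 0 S\<close> \<open>y < x\<close> by simp
    qed simp
  qed (use fin in simp)
  also have "\<dots> = {..card S}" using fin zero by (simp add: lessThan_Suc_atMost)
  finally have "insert 0 S = {..card S}" .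
  then have "S = {..card S} - {0}" using zero by blast
  also have "\<dots> = {1..card S}" by auto
  finally show ?thesis .
qed

lemma diagram_memD: "is_diagram D \<Longrightarrow> (i, j) \<in> D \<Longrightarrow> 1 \<le> i \<and> 1 \<le> j"
  unfolding is_diagram_def by blast

lemma diagram_closed:
  "is_diagram D \<Longrightarrow> (i, j) \<in> D \<Longrightarrow> 1 \<le> i' \<Longrightarrow> i' \<le> i \<Longrightarrow> 1 \<le> j' \<Longrightarrow> j' \<le> j \<Longrightarrow> (i', j') \<in> D"
  unfolding is_diagram_def by blast

lemma row_set_eq:
  assumes D: "is_diagram D"
  shows "{j. (r, j) \<in> D} = {1..row_len D r}"
  unfolding row_len_def
proof (rule downclosed_eq_atLeastAtMost)
  have "{j. (r, j) \<in> D} \<subseteq> snd ` D" by force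
  then show "finite {j. (r, j) \<in> D}"
    using D finite_subset unfolding is_diagram_def by blast
next
  show "\<And>x. x \<in> {j. (r, j) \<in> D} \<Longrightarrow> 1 \<le> x"
    using diagram_memD[OF D] by blast
  show "\<And>x y. x \<in> {j. (r, j) \<in> D} \<Longrightarrow> 1 \<le> y \<Longrightarrow> y < x \<Longrightarrow> y \<in> {j. (r, j) \<in> D}"
    using diagram_memD[OF D] diagram_closed[OF D] by (metis less_imp_le_nat mem_Collect_eq order_refl)
qed

lemma col_set_eq:
  assumes D: "is_diagram D"
  shows "{i. (i, c) \<in> D} = {1..col_len D c}"
  unfolding col_len_def
proof (rule downclosed_eq_atLeastAtMost)
  have "{i. (i, c) \<in> D} \<subseteq> fst ` D" by force
  then show "finite {i. (i, c) \<in> D}"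
    using D finite_subset unfolding is_diagram_def by blast
next
  show "\<And>x. x \<in> {i. (i, c) \<in> D} \<Longrightarrow> 1 \<le> x"
    using diagram_memD[OF D] by blast
  show "\<And>x y. x \<in> {i. (i, c) \<in> D} \<Longrightarrow> 1 \<le> y \<Longrightarrow> y < x \<Longrightarrow> y \<in> {i. (i, c) \<in> D}"
    using diagram_memD[OF D] diagram_closed[OF D] by (metis less_imp_le_nat mem_Collect_eq order_refl)
qed

lemma row_len_iff: "is_diagram D \<Longrightarrow> (r, j) \<in> D \<longleftrightarrow> 1 \<le> j \<and> j \<le> row_len D r"
  by (drule row_set_eq[of _ r]) (simp add: set_eq_iff)

lemma col_len_iff: "is_diagram D \<Longrightarrow> (i, c) \<in> D \<longleftrightarrow> 1 \<le> i \<and> i \<le> col_len D c"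
  by (drule col_set_eq[of _ c]) (simp add: set_eq_iff)

lemma row_len_antimono:
  assumes D: "is_diagram D" and "1 \<le> r" "r \<le> r'"
  shows "row_len D r' \<le> row_len D r"
proof (cases "row_len D r' = 0")
  case False
  then have "(r', row_len D r') \<in> D" using row_len_iff[OF D] by simp
  then have "(r, row_len D r') \<in> D" using diagram_closed[OF D] assms False by simp
  then show ?thesis using row_len_iff[OF D] by simp
qed simp

lemma finite_row_set: "is_diagram D \<Longrightarrow> finite {j. (r, j) \<in> D}"
  by (simp add: row_set_eq)

lemma row_len_mono: "is_diagram \<sigma> \<Longrightarrow> \<rho> \<subseteq> \<sigma> \<Longrightarrow> row_len \<rho> r \<le> row_len \<sigma> r"
  unfolding row_len_def by (rule card_mono) (auto simp: finite_row_set)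

lemma adds_box_row_len:
  assumes step: "adds_box \<rho> \<sigma>"
  shows "row_len \<sigma> r \<le> Suc (row_len \<rho> r)"
    and "row_len \<rho> r < row_len \<sigma> r \<Longrightarrow> added_row \<rho> \<sigma> = r"
proof -
  obtain b where b: "\<sigma> - \<rho> = {b}"
    using step card_1_singletonE unfolding adds_box_def by blast
  have sub: "\<rho> \<subseteq> \<sigma>" using step unfolding adds_box_def by blast
  have fin: "finite {j. (r, j) \<in> \<rho>}"
    using step finite_row_set unfolding adds_box_def by blast
  have "{j. (r, j) \<in> \<sigma>} \<subseteq> insert (snd b) {j. (r, j) \<in> \<rho>}"
    using b by force
  then have "row_len \<sigma> r \<le> card (insert (snd b) {j. (r, j) \<in> \<rho>})"
    unfolding row_len_def using fin by (simp add: card_mono)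
  also have "\<dots> \<le> Suc (row_len \<rho> r)"
    unfolding row_len_def using fin by (simp add: card_insert_if)
  finally show "row_len \<sigma> r \<le> Suc (row_len \<rho> r)" .
  assume grows: "row_len \<rho> r < row_len \<sigma> r"
  have "fst b = r"
  proof (rule ccontr)
    assume "fst b \<noteq> r"
    then have "{j. (r, j) \<in> \<sigma>} = {j. (r, j) \<in> \<rho>}" using b sub by force
    then show False using grows unfolding row_len_def by simp
  qed
  moreover have "(THE b'. b' \<in> \<sigma> - \<rho>) = b" using b by simp
  ultimately show "added_row \<rho> \<sigma> = r" unfolding added_row_def by simp
qed

lemma seq_adds_box: "is_diagram_seq rhos \<Longrightarrow> Suc m < length rhos \<Longrightarrow> adds_box (rhos ! m) (rhos ! Suc m)"
  unfolding is_diagram_seq_def by blast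

lemma seq_diagram:
  assumes seq: "is_diagram_seq rhos" and m: "m < length rhos"
  shows "is_diagram (rhos ! m)"
proof (cases m)
  case 0
  then show ?thesis using seq unfolding is_diagram_seq_def by (metis hd_conv_nth)
next
  case (Suc k)
  then show ?thesis using seq_adds_box[OF seq, of k] m unfolding adds_box_def by simp
qed

lemma seq_subset:
  assumes seq: "is_diagram_seq rhos"
  shows "m \<le> m' \<Longrightarrow> m' < length rhos \<Longrightarrow> rhos ! m \<subseteq> rhos ! m'"
proof (induction m' rule: dec_induct)
  case (step m')
  then show ?case using seq_adds_box[OF seq, of m'] unfolding adds_box_def by auto
qed simp

lemma first_crossing:
  fixes f :: "nat \<Rightarrow> nat"
  assumes "N \<le> L" and "f N < x" and "x \<le> f L"
  shows "\<exists>k. N \<le> k \<and> k < L \<and> f k < x \<and> x \<le> f (Suc k)"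
  using assms
proof (induction L rule: dec_induct)
  case (step L)
  then show ?case by (cases "f L < x") (auto intro: less_SucI)
qed simp

lemma row_len_seq_step:
  assumes seq: "is_diagram_seq rhos" and "m < length rhos" "m' < length rhos" "m' \<le> Suc m"
  shows "row_len (rhos ! m') r \<le> Suc (row_len (rhos ! m) r)"
proof (cases "m' \<le> m")
  case True
  then have "row_len (rhos ! m') r \<le> row_len (rhos ! m) r"
    using row_len_mono seq_diagram[OF seq] seq_subset[OF seq] assms by simp
  then show ?thesis by simp
next
  case False
  then have "m' = Suc m" using assms by simp
  then show ?thesis using adds_box_row_len(1) seq_adds_box[OF seq] assms by simp
qed

lemma tableau_row_antimono:
  assumes lam: "is_diagram lam" and T: "reverse_tableau lam T" and j: "1 \<le> j"
  shows "j \<le> j' \<Longrightarrow> (i, j') \<in> lam \<Longrightarrow> T (i, j') \<le> T (i, j)"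
proof (induction j' rule: dec_induct)
  case (step n)
  then have "(i, n) \<in> lam"
    using diagram_closed[OF lam, of i "Suc n" i n] diagram_memD[OF lam] j by fastforce
  then have "T (i, Suc n) \<le> T (i, n)"
    using T step.prems unfolding reverse_tableau_def by blast
  then show ?case using step.IH \<open>(i, n) \<in> lam\<close> by simp
qed simp

lemma tableau_col_strict:
  assumes lam: "is_diagram lam" and T: "reverse_tableau lam T" and i: "1 \<le> i"
  shows "i \<le> i' \<Longrightarrow> (i', j) \<in> lam \<Longrightarrow> T (i', j) + (i' - i) \<le> T (i, j)"
proof (induction i' rule: dec_induct)
  case (step n)
  then have "(n, j) \<in> lam"
    using diagram_closed[OF lam, of "Suc n" j n j] diagram_memD[OF lam] i by fastforce
  then have "T (Suc n, j) < T (n, j)"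
    using T step.prems unfolding reverse_tableau_def by blast
  then show ?case using step.IH \<open>(n, j) \<in> lam\<close> step.hyps by simp
qed simp

(* Key tableau fact: a box weakly to the right of (1, j) whose entry is at least
   T (1, j) must lie in the first row, since going down a column strictly
   decreases the entry. *)
lemma large_entry_in_first_row:
  assumes lam: "is_diagram lam" and T: "reverse_tableau lam T"
    and c: "(i, j') \<in> lam" and j: "1 \<le> j" "j \<le> j'" and ge: "T (1, j) \<le> T (i, j')"
  shows "i = 1"
proof -
  have i: "1 \<le> i" using diagram_memD[OF lam c] by simp
  have top: "(1, j') \<in> lam" using diagram_closed[OF lam c] i j by simp
  have "T (i, j') + (i - 1) \<le> T (1, j')"
    using tableau_col_strict[OF lam T _ i c] by simp
  also have "\<dots> \<le> T (1, j)" using tableau_row_antimono[OF lam T j(1) j(2) top] .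
  finally show ?thesis using ge i by simp
qed

lemma col_prec_irrefl: "\<not> col_prec a a"
  unfolding col_prec_def by simp

lemma col_prec_trans: "col_prec a b \<Longrightarrow> col_prec b c \<Longrightarrow> col_prec a c"
  unfolding col_prec_def by auto

lemma col_prec_asym: "col_prec a b \<Longrightarrow> \<not> col_prec b a"
  unfolding col_prec_def by auto

lemma col_prec_total: "a \<noteq> b \<Longrightarrow> col_prec a b \<or> col_prec b a"
  unfolding col_prec_def by (cases a; cases b) auto

lemma col_prec_box_above:
  assumes "1 < i"
  shows "col_prec (i, j) (i - 1, j)"
    and "col_prec (i, j) x \<Longrightarrow> \<not> col_prec (i - 1, j) x \<Longrightarrow> x = (i - 1, j)"
  using assms unfolding col_prec_def by (cases x; auto)+

(* For an unbarred box b this is the index i with rho(b) = rho^(i); unlike rho_at it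
   also counts b itself when b is chosen, which makes the induction below uniform. *)
definition chosen_upto :: "(nat \<times> nat) list \<Rightarrow> nat \<times> nat \<Rightarrow> nat" where
  "chosen_upto alphas b = card {k. k < length alphas \<and> \<not> col_prec b (alphas ! k)}"

lemma chosen_upto_le: "chosen_upto alphas b \<le> length alphas"
proof -
  have "{k. k < length alphas \<and> \<not> col_prec b (alphas ! k)} \<subseteq> {..<length alphas}" by auto
  then show ?thesis unfolding chosen_upto_def using card_mono[of "{..<length alphas}"] by fastforce
qed

(* Since the chosen boxes are listed in column order, the chosen boxes not after b
   are exactly the first chosen_upto alphas b of them. *)
lemma chosen_upto_iff:
  assumes sorted: "sorted_wrt col_prec alphas" and k: "k < length alphas"
  shows "k < chosen_upto alphas b \<longleftrightarrow> \<not> col_prec b (alphas ! k)"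
proof -
  let ?S = "{k. k < length alphas \<and> \<not> col_prec b (alphas ! k)}"
  have "?S = {..<card ?S}"
  proof (rule downclosed_eq_lessThan)
    fix x y assume "x \<in> ?S" "y < x"
    then show "y \<in> ?S"
      using sorted col_prec_trans[of b "alphas ! y" "alphas ! x"]
      by (auto simp: sorted_wrt_iff_nth_less)
  qed simp
  then show ?thesis using k unfolding chosen_upto_def by blast
qed

lemma chosen_upto_nth:
  assumes sorted: "sorted_wrt col_prec alphas" and k: "k < length alphas"
  shows "chosen_upto alphas (alphas ! k) = Suc k"
proof -
  have "k < chosen_upto alphas (alphas ! k)"
    using chosen_upto_iff[OF sorted k] col_prec_irrefl by blast
  moreover have "chosen_upto alphas (alphas ! k) \<le> Suc k"
  proof (cases "Suc k < length alphas")
    case True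
    then have "col_prec (alphas ! k) (alphas ! Suc k)"
      using sorted by (simp add: sorted_wrt_iff_nth_less)
    then show ?thesis using chosen_upto_iff[OF sorted True] by (meson not_less)
  next
    case False
    then show ?thesis using chosen_upto_le[of alphas "alphas ! k"] k by linarith
  qed
  ultimately show ?thesis by simp
qed

lemma chosen_upto_successor:
  assumes sorted: "sorted_wrt col_prec alphas"
    and next_box: "\<And>x. col_prec b x \<Longrightarrow> \<not> col_prec c x \<Longrightarrow> x = c"
  shows "chosen_upto alphas c \<le> Suc (chosen_upto alphas b)"
proof (rule ccontr)
  define n where "n = chosen_upto alphas b"
  assume "\<not> chosen_upto alphas c \<le> Suc n"
  then have lt: "Suc n < chosen_upto alphas c" by simp
  then have len: "Suc n < length alphas" using chosen_upto_le[of alphas c] by linarith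
  have "alphas ! n = c" "alphas ! Suc n = c"
    using next_box chosen_upto_iff[OF sorted] len lt unfolding n_def
    by (metis Suc_lessD lessI less_irrefl order.strict_trans)+
  moreover have "col_prec (alphas ! n) (alphas ! Suc n)"
    using sorted len by (simp add: sorted_wrt_iff_nth_less)
  ultimately show False using col_prec_irrefl by simp
qed

(* For an unbarred box both counts agree, by totality of the column order. *)
lemma rho_at_eq:
  assumes "b \<notin> set alphas"
  shows "rho_at rhos alphas b = rhos ! chosen_upto alphas b"
proof -
  have "{k. k < length alphas \<and> col_prec (alphas ! k) b}
      = {k. k < length alphas \<and> \<not> col_prec b (alphas ! k)}"
    using assms col_prec_total col_prec_asym nth_mem by metis
  then show ?thesis unfolding rho_at_def chosen_upto_def by simp
qed

locale bounded_calT =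
  fixes lam :: "(nat \<times> nat) set" and rhos :: "(nat \<times> nat) set list"
    and T :: "nat \<times> nat \<Rightarrow> nat" and alphas :: "(nat \<times> nat) list"
  assumes lam: "is_diagram lam"
    and seq: "is_diagram_seq rhos"
    and calT: "in_calT lam rhos T alphas"
    and bounded: "nu_bounded lam (last rhos) T"
begin

lemma tableau: "reverse_tableau lam T"
  and sorted: "sorted_wrt col_prec alphas"
  and chosen_in_lam: "k < length alphas \<Longrightarrow> alphas ! k \<in> lam"
  using calT unfolding in_calT_def by auto

lemma length_rhos: "length rhos = Suc (length alphas)"
  using calT seq unfolding in_calT_def is_diagram_seq_def by (cases rhos) auto

lemma chosen_entry:
  assumes "k < length alphas"
  shows "T (alphas ! k) = added_row (rhos ! k) (rhos ! Suc k)"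
  using calT assms unfolding in_calT_def seq_row_def
  by (metis Suc_leI diff_Suc_1 zero_less_Suc le_add1 plus_1_eq_Suc)

lemma entry_pos: "b \<in> lam \<Longrightarrow> 1 \<le> T b"
  using tableau unfolding reverse_tableau_def by blast

lemma rho_diagram: "m \<le> length alphas \<Longrightarrow> is_diagram (rhos ! m)"
  using seq_diagram[OF seq] length_rhos by simp

(* row_at b is the length of row T(b) of rho^(chosen_upto alphas b); for unbarred b
   it is rho(b)_{T(b)}. The theorem says that it exceeds the content of b. *)
definition row_at :: "nat \<times> nat \<Rightarrow> nat" where
  "row_at b = row_len (rhos ! chosen_upto alphas b) (T b)"

lemma row_at_chosen: "k < length alphas \<Longrightarrow> row_at (alphas ! k) = row_len (rhos ! Suc k) (T (alphas ! k))"
  unfolding row_at_def using chosen_upto_nth[OF sorted] by simp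

(* Induction step below the first row: the bound for the box above (content one
   larger) yields the bound for the box itself, because at most one chosen box
   lies between them and the entry above is strictly larger. *)
lemma bound_from_box_above:
  assumes b: "(i, j) \<in> lam" and i: "1 < i"
    and above: "content (i - 1, j) < int (row_at (i - 1, j))"
  shows "content (i, j) < int (row_at (i, j))"
proof -
  let ?n = "chosen_upto alphas (i, j)" and ?n' = "chosen_upto alphas (i - 1, j)"
  have above_in: "(i - 1, j) \<in> lam"
    using diagram_closed[OF lam b] diagram_memD[OF lam b] i by simp
  have entries: "T (i, j) < T (i - 1, j)"
    using tableau b above_in i unfolding reverse_tableau_def by (metis Suc_pred' gr_implies_not0 not_gr0)
  have n: "?n < length rhos" and n': "?n' < length rhos"
    using chosen_upto_le length_rhos by (metis le_imp_less_Suc)+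
  have "?n' \<le> Suc ?n"
    using chosen_upto_successor[OF sorted] col_prec_box_above(2)[OF i] by blast
  then have "row_at (i - 1, j) \<le> Suc (row_len (rhos ! ?n) (T (i - 1, j)))"
    unfolding row_at_def using row_len_seq_step[OF seq n n'] by blast
  also have "\<dots> \<le> Suc (row_at (i, j))"
    unfolding row_at_def
    using row_len_antimono[OF seq_diagram[OF seq n]] entry_pos[OF b] entries by simp
  finally show ?thesis using above i unfolding content_def by simp
qed

(* Induction step in the first row, where content (1, j) + 1 = j. If row T(1,j) of
   rho(1,j) were shorter than j, then by nu-boundedness it reaches length j later in R,
   at a step adding a box to row T(1,j); the chosen box alpha of that step lies after
   (1, j) and has entry T(1,j), so it sits in row 1 to the right of column j, and its
   own bound would force rho(alpha)_{T(1,j)} > j, contradicting the single-box step. *)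
lemma bound_in_first_row:
  assumes b: "(1, j) \<in> lam"
    and later: "\<And>k. k < length alphas \<Longrightarrow> col_prec (1, j) (alphas ! k) \<Longrightarrow>
                  content (alphas ! k) < int (row_at (alphas ! k))"
  shows "content (1, j) < int (row_at (1, j))"
proof (rule ccontr)
  let ?n = "chosen_upto alphas (1, j)" and ?t = "T (1, j)" and ?l = "length alphas"
  have j: "1 \<le> j" using diagram_memD[OF lam b] by simp
  assume "\<not> ?thesis"
  then have short: "row_len (rhos ! ?n) ?t < j"
    unfolding row_at_def content_def by simp
  have "?t \<le> col_len (last rhos) j"
    using bounded row_len_iff[OF lam] b unfolding nu_bounded_def by blast
  moreover have last: "last rhos = rhos ! ?l"
    using length_rhos seq unfolding is_diagram_seq_def by (simp add: last_conv_nth)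
  ultimately have "(?t, j) \<in> rhos ! ?l"
    using col_len_iff[OF rho_diagram] entry_pos[OF b] by simp
  then have long: "j \<le> row_len (rhos ! ?l) ?t"
    using row_len_iff[OF rho_diagram] by simp
  obtain k where k: "?n \<le> k" "k < ?l"
    and crossing: "row_len (rhos ! k) ?t < j" "j \<le> row_len (rhos ! Suc k) ?t"
    using first_crossing[of ?n ?l "\<lambda>m. row_len (rhos ! m) ?t" j] chosen_upto_le short long
    by blast
  have step: "adds_box (rhos ! k) (rhos ! Suc k)"
    using seq_adds_box[OF seq] k length_rhos by simp
  have entry: "T (alphas ! k) = ?t"
    using chosen_entry[OF k(2)] adds_box_row_len(2)[OF step] crossing by simp
  have after: "col_prec (1, j) (alphas ! k)"
    using chosen_upto_iff[OF sorted k(2), of "(1, j)"] k(1) by simp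
  have "row_len (rhos ! Suc k) ?t \<le> j"
    using adds_box_row_len(1)[OF step, of ?t] crossing(1) by simp
  then have "row_at (alphas ! k) \<le> j"
    using row_at_chosen[OF k(2)] entry by simp
  then have small: "content (alphas ! k) < int j"
    using later[OF k(2) after] by simp
  obtain i' j' where ak: "alphas ! k = (i', j')" by fastforce
  have in_lam: "(i', j') \<in> lam" using chosen_in_lam[OF k(2)] ak by simp
  have "j < j'"
    using after ak diagram_memD[OF lam in_lam] unfolding col_prec_def by auto
  moreover have "i' = 1"
    using large_entry_in_first_row[OF lam tableau in_lam j] \<open>j < j'\<close> entry ak by simp
  ultimately show False using small ak unfolding content_def by simp
qed

theorem content_lt_row_at:
  assumes "b \<in> lam"
  shows "content b < int (row_at b)"
  using assms
proof (induction "card {c \<in> lam. col_prec b c}" arbitrary: b rule: less_induct)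
  case less
  have IH: "content c < int (row_at c)" if "c \<in> lam" "col_prec b c" for c
  proof (rule less.hyps[OF _ that(1)])
    have "{e \<in> lam. col_prec c e} \<subset> {e \<in> lam. col_prec b e}"
      using that col_prec_trans col_prec_irrefl by blast
    then show "card {e \<in> lam. col_prec c e} < card {e \<in> lam. col_prec b e}"
      using lam unfolding is_diagram_def by (simp add: psubset_card_mono)
  qed
  obtain i j where b: "b = (i, j)" by fastforce
  consider "i = 1" | "1 < i" using diagram_memD[OF lam] less.prems b by fastforce
  then show ?case
  proof cases
    case 1
    then show ?thesis using bound_in_first_row IH chosen_in_lam less.prems b by simp
  next
    case 2
    have "(i - 1, j) \<in> lam"
      using diagram_closed[OF lam, of i j "i - 1" j] diagram_memD[OF lam, of i j] less.prems b 2 by simp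
    then show ?thesis
      using bound_from_box_above IH col_prec_box_above(1)[OF 2] less.prems b 2 by simp
  qed
qed

end

theorem lemma2p5:
  fixes lam :: "(nat \<times> nat) set" and rhos :: "(nat \<times> nat) set list"
    and T :: "nat \<times> nat \<Rightarrow> nat" and alphas :: "(nat \<times> nat) list"
  assumes "is_diagram lam"
    and "is_diagram_seq rhos"
    and "in_calT lam rhos T alphas"
    and "nu_bounded lam (last rhos) T"
    and "a \<in> lam" and "a \<notin> set alphas"
  shows "int (row_len (rho_at rhos alphas a) (T a)) > content a"
proof -
  interpret bounded_calT lam rhos T alphas
    using assms(1-4) by unfold_locales
  have "content a < int (row_at a)" using content_lt_row_at[OF assms(5)] .
  then show ?thesis using rho_at_eq[OF assms(6)] unfolding row_at_def by simp
qed

end
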